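(* $\mathcal{RD}_{\text{EGC*}}=\mathcal{RD}_{\text{EGC}}$.
   Context: Let $\mathcal{X}$ and $\hat{\mathcal{X}}$ be finite sets, $p_X$ a distribution on $\mathcal{X}$, $X$ a random variable with distribution $p_X$, and $d:\mathcal{X}\times\hat{\mathcal{X}}\to[0,\infty)$ a distortion measure. All auxiliary random variables below take values in finite sets. The EGC* region $\mathcal{RD}_{\text{EGC*}}$ is the convex closure of the set of quintuples $(R_1,R_2,D_{\{1\}},D_{\{2\}},D_{\{1,2\}})$ for which there exist auxiliary random variables $X_{\{1\}}$ and $X_{\{2\}}$, jointly distributed with $X$, and functions $\phi_{\{1\}},\phi_{\{2\}},\phi_{\{1,2\}}$ with values in $\hat{\mathcal{X}}$, such that $R_k\ge I(X;X_{\{k\}})$ for $k\in\{1,2\}$; $R_1+R_2\ge I(X;X_{\{1\}},X_{\{2\}})+I(X_{\{1\}};X_{\{2\}})$; $D_{\{k\}}\ge \mathbb{E}[d(X,\phi_{\{k\}}(X_{\{k\}}))]$ for $k\in\{1,2\}$; $D_{\{1,2\}}\ge\mathbb{E}[d(X,\phi_{\{1,2\}}(X_{\{1\}},X_{\{2\}}))]$. The EGC region $\mathcal{RD}_{\text{EGC}}$ is the convex closure of the set of quintuples $(R_1,R_2,D_{\{1\}},D_{\{2\}},D_{\{1,2\}})$ for which there exist random variables $X_{\{1\}},X_{\{2\}},X_{\{1,2\}}$ taking values in $\hat{\mathcal{X}}$, jointly distributed with $X$, such that $R_k\ge I(X;X_{\{k\}})$ for $k\in\{1,2\}$; $R_1+R_2\ge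 I(X;X_{\{1\}},X_{\{2\}},X_{\{1,2\}})+I(X_{\{1\}};X_{\{2\}})$; $D_{\mathcal{K}}\ge\mathbb{E}[d(X,X_{\mathcal{K}})]$ for $\mathcal{K}\in\{\{1\},\{2\},\{1,2\}\}$. *)

theory Defs
  imports "HOL-Probability.Probability"
begin

definition mutual_info :: "('a \<times> 'b) pmf \<Rightarrow> real" where
  "mutual_info P =
     (\<Sum>ab\<in>set_pmf P. pmf P ab *
        log 2 (pmf P ab / (pmf (map_pmf fst P) (fst ab) * pmf (map_pmf snd P) (snd ab))))"

type_synonym quint = "real \<times> real \<times> real \<times> real \<times> real"

definition convex_closure :: "quint set \<Rightarrow> quint set" where
  "convex_closure S = closure (convex hull S)"

text \<open>EGC* region. Auxiliary variables X_1, X_2 take values in finite subsets of nat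
(every finite alphabet embeds in nat); the joint law of (X, X_1, X_2) is P.\<close>
definition RD_EGCstar_pre :: "'x pmf \<Rightarrow> ('x \<Rightarrow> 'y \<Rightarrow> real) \<Rightarrow> quint set" where
  "RD_EGCstar_pre pX d =
    {(R1, R2, D1, D2, D12). \<exists>(P :: ('x \<times> nat \<times> nat) pmf) (\<phi>1 :: nat \<Rightarrow> 'y) (\<phi>2 :: nat \<Rightarrow> 'y)
        (\<phi>12 :: nat \<Rightarrow> nat \<Rightarrow> 'y).
       finite (set_pmf P) \<and> map_pmf fst P = pX \<and>
       R1 \<ge> mutual_info (map_pmf (\<lambda>(x,u,v). (x,u)) P) \<and>
       R2 \<ge> mutual_info (map_pmf (\<lambda>(x,u,v). (x,v)) P) \<and>
       R1 + R2 \<ge> mutual_info (map_pmf (\<lambda>(x,u,v). (x,(u,v))) P)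
                 + mutual_info (map_pmf (\<lambda>(x,u,v). (u,v)) P) \<and>
       D1 \<ge> measure_pmf.expectation P (\<lambda>(x,u,v). d x (\<phi>1 u)) \<and>
       D2 \<ge> measure_pmf.expectation P (\<lambda>(x,u,v). d x (\<phi>2 v)) \<and>
       D12 \<ge> measure_pmf.expectation P (\<lambda>(x,u,v). d x (\<phi>12 u v))}"

definition RD_EGCstar :: "'x pmf \<Rightarrow> ('x \<Rightarrow> 'y \<Rightarrow> real) \<Rightarrow> quint set" where
  "RD_EGCstar pX d = convex_closure (RD_EGCstar_pre pX d)"

text \<open>EGC region: X_{1}, X_{2}, X_{12} take values in the reconstruction alphabet 'y.\<close>
definition RD_EGC_pre :: "'x pmf \<Rightarrow> ('x \<Rightarrow> 'y \<Rightarrow> real) \<Rightarrow> quint set" where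
  "RD_EGC_pre pX d =
    {(R1, R2, D1, D2, D12). \<exists>(P :: ('x \<times> 'y \<times> 'y \<times> 'y) pmf).
       map_pmf fst P = pX \<and>
       R1 \<ge> mutual_info (map_pmf (\<lambda>(x,a,b,c). (x,a)) P) \<and>
       R2 \<ge> mutual_info (map_pmf (\<lambda>(x,a,b,c). (x,b)) P) \<and>
       R1 + R2 \<ge> mutual_info (map_pmf (\<lambda>(x,a,b,c). (x,(a,b,c))) P)
                 + mutual_info (map_pmf (\<lambda>(x,a,b,c). (a,b)) P) \<and>
       D1 \<ge> measure_pmf.expectation P (\<lambda>(x,a,b,c). d x a) \<and>
       D2 \<ge> measure_pmf.expectation P (\<lambda>(x,a,b,c). d x b) \<and>
       D12 \<ge> measure_pmf.expectation P (\<lambda>(x,a,b,c). d x c)}"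

definition RD_EGC :: "'x pmf \<Rightarrow> ('x \<Rightarrow> 'y \<Rightarrow> real) \<Rightarrow> quint set" where
  "RD_EGC pX d = convex_closure (RD_EGC_pre pX d)"

end

theory Submission
  imports Defs
begin

text \<open>
  \<open>EGC* \<subseteq> EGC\<close>: the reconstructions \<open>\<phi>\<^sub>K\<close> of an EGC* scheme are themselves admissible
  variables \<open>X\<^sub>K\<close> of an EGC scheme, and by data processing they only lower the mutual informations.

  \<open>EGC \<subseteq> EGC*\<close> up to convexification: write \<open>X\<^sub>1\<^sub>2 = W(X\<^sub>1, X\<^sub>2)\<close> with a random function \<open>W\<close>
  independent of \<open>(X\<^sub>1, X\<^sub>2)\<close>, and couple \<open>X\<close> so that it is conditionally independent of \<open>W\<close> given
  \<open>(X\<^sub>1, X\<^sub>2, X\<^sub>1\<^sub>2)\<close>. The auxiliaries \<open>U = X\<^sub>1\<close>, \<open>V = (X\<^sub>2, W)\<close> then satisfy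
  \<open>I(X; U, V) = I(X; X\<^sub>1, X\<^sub>2, X\<^sub>1\<^sub>2)\<close> and \<open>I(U; V) = I(X\<^sub>1; X\<^sub>2)\<close>, and all three reconstructions
  are functions of \<open>U\<close> and \<open>V\<close>. Since \<open>I(X; U) + I(X; V) \<le> I(X; U, V) + I(U; V)\<close>
  (submodularity of entropy), this scheme achieves the corner \<open>R\<^sub>1 = I(X; X\<^sub>1)\<close> of the rate pentagon of
  the EGC constraints; by symmetry so does the other corner, and the pentagon lies in the convex hull
  of its two corners.
\<close>

section \<open>Entropy and mutual information of finitely supported distributions\<close>


definition entropy_pmf :: "'a pmf \<Rightarrow> real" where
  "entropy_pmf p = - (\<Sum>x\<in>set_pmf p. pmf p x * log 2 (pmf p x))"

lemma sum_set_pmf_map_pmf: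
  assumes "finite (set_pmf p)"
  shows "(\<Sum>y\<in>set_pmf (map_pmf f p). pmf (map_pmf f p) y * h y) = (\<Sum>x\<in>set_pmf p. pmf p x * h (f x))"
proof -
  have "measure_pmf.expectation (map_pmf f p) h = (\<Sum>y\<in>set_pmf (map_pmf f p). pmf (map_pmf f p) y * h y)"
    using assms by (subst integral_measure_pmf_real[where A="set_pmf (map_pmf f p)"]) (auto simp: mult.commute)
  moreover have "measure_pmf.expectation p (\<lambda>x. h (f x)) = (\<Sum>x\<in>set_pmf p. pmf p x * h (f x))"
    using assms by (subst integral_measure_pmf_real[where A="set_pmf p"]) (auto simp: mult.commute)
  ultimately show ?thesis by simp
qed

lemma entropy_pmf_map_inj:
  assumes "finite (set_pmf p)" "inj_on f (set_pmf p)"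
  shows "entropy_pmf (map_pmf f p) = entropy_pmf p"
proof -
  have "(\<Sum>y\<in>set_pmf (map_pmf f p). pmf (map_pmf f p) y * log 2 (pmf (map_pmf f p) y))
      = (\<Sum>x\<in>set_pmf p. pmf (map_pmf f p) (f x) * log 2 (pmf (map_pmf f p) (f x)))"
    using assms by (simp add: sum.reindex)
  also have "\<dots> = (\<Sum>x\<in>set_pmf p. pmf p x * log 2 (pmf p x))"
    using assms by (intro sum.cong) (auto simp: pmf_map_inj)
  finally show ?thesis unfolding entropy_pmf_def by simp
qed

lemma entropy_pmf_map_eq_same_fibres:
  assumes "finite (set_pmf p)"
    and "\<And>x x'. x \<in> set_pmf p \<Longrightarrow> x' \<in> set_pmf p \<Longrightarrow> f x = f x' \<longleftrightarrow> g x = g x'"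
  shows "entropy_pmf (map_pmf f p) = entropy_pmf (map_pmf g p)"
proof -
  define k where "k = (\<lambda>y. f (inv_into (set_pmf p) g y))"
  have k: "k (g x) = f x" if "x \<in> set_pmf p" for x
    using assms(2)[OF that inv_into_into[of "g x" g "set_pmf p"]] that
    by (simp add: k_def f_inv_into_f)
  have "map_pmf f p = map_pmf k (map_pmf g p)"
    by (simp add: map_pmf_comp k cong: map_pmf_cong)
  moreover have "inj_on k (set_pmf (map_pmf g p))"
    by (auto simp: inj_on_def k assms(2))
  ultimately show ?thesis using entropy_pmf_map_inj[of "map_pmf g p" k] assms(1) by simp
qed

lemma entropy_pmf_map_pmf:
  assumes "finite (set_pmf p)"
  shows "entropy_pmf (map_pmf f p) = - (\<Sum>x\<in>set_pmf p. pmf p x * log 2 (pmf (map_pmf f p) (f x)))"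
  unfolding entropy_pmf_def using sum_set_pmf_map_pmf[OF assms] by simp

lemma mutual_info_eq_entropy_pmf:
  assumes "finite (set_pmf p)"
  shows "mutual_info p = entropy_pmf (map_pmf fst p) + entropy_pmf (map_pmf snd p) - entropy_pmf p"
proof -
  let ?p1 = "pmf (map_pmf fst p)" and ?p2 = "pmf (map_pmf snd p)"
  have "mutual_info p = (\<Sum>z\<in>set_pmf p. pmf p z * log 2 (pmf p z)
        - pmf p z * log 2 (?p1 (fst z)) - pmf p z * log 2 (?p2 (snd z)))"
    unfolding mutual_info_def
  proof (intro sum.cong refl)
    fix z assume z: "z \<in> set_pmf p"
    then have "pmf p z > 0" "?p1 (fst z) > 0" "?p2 (snd z) > 0"
      by (auto simp: pmf_positive)
    then show "pmf p z * log 2 (pmf p z / (?p1 (fst z) * ?p2 (snd z)))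
        = pmf p z * log 2 (pmf p z) - pmf p z * log 2 (?p1 (fst z)) - pmf p z * log 2 (?p2 (snd z))"
      by (simp add: log_divide log_mult algebra_simps)
  qed
  also have "\<dots> = - entropy_pmf p + entropy_pmf (map_pmf fst p) + entropy_pmf (map_pmf snd p)"
    using sum_set_pmf_map_pmf[OF assms, of fst "\<lambda>y. log 2 (?p1 y)"]
      sum_set_pmf_map_pmf[OF assms, of snd "\<lambda>y. log 2 (?p2 y)"]
    by (simp add: entropy_pmf_def sum_subtractf)
  finally show ?thesis by simp
qed

lemma mutual_info_map_pmf_pair:
  assumes "finite (set_pmf p)"
  shows "mutual_info (map_pmf (\<lambda>x. (f x, g x)) p)
    = entropy_pmf (map_pmf f p) + entropy_pmf (map_pmf g p) - entropy_pmf (map_pmf (\<lambda>x. (f x, g x)) p)"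
  using assms by (subst mutual_info_eq_entropy_pmf) (simp_all add: map_pmf_comp)

lemma log2_le_minus_one: "0 < t \<Longrightarrow> log 2 t \<le> (t - 1) / ln 2"
  unfolding log_def by (intro divide_right_mono ln_le_minus_one) auto

lemma gibbs_inequality:
  assumes fin: "finite (set_pmf p)" and pos: "\<And>x. x \<in> set_pmf p \<Longrightarrow> 0 < q x"
    and sum_le: "(\<Sum>x\<in>set_pmf p. q x) \<le> 1"
  shows "(\<Sum>x\<in>set_pmf p. pmf p x * log 2 (q x / pmf p x)) \<le> 0"
proof -
  have "(\<Sum>x\<in>set_pmf p. pmf p x * log 2 (q x / pmf p x))
      \<le> (\<Sum>x\<in>set_pmf p. pmf p x * ((q x / pmf p x - 1) / ln 2))"
    using pos by (intro sum_mono mult_left_mono log2_le_minus_one) (auto simp: pmf_positive)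
  also have "\<dots> = (\<Sum>x\<in>set_pmf p. (q x - pmf p x) / ln 2)"
    by (intro sum.cong refl) (auto simp: field_simps set_pmf_iff)
  also have "\<dots> = ((\<Sum>x\<in>set_pmf p. q x) - 1) / ln 2"
    using fin by (simp add: sum_divide_distrib[symmetric] sum_subtractf sum_pmf_eq_1)
  also have "\<dots> \<le> 0"
    using sum_le by (intro divide_nonpos_pos) auto
  finally show ?thesis .
qed

lemma sum_pmf_eq_pmf_map_snd:
  assumes "finite A" "set_pmf p \<subseteq> A \<times> UNIV"
  shows "(\<Sum>a\<in>A. pmf p (a, c)) = pmf (map_pmf snd p) c"
proof -
  have "pmf (map_pmf snd p) c = measure p (snd -` {c} \<inter> set_pmf p)"
    by (simp add: pmf_map measure_Int_set_pmf)
  also have "snd -` {c} \<inter> set_pmf p = (\<lambda>a. (a, c)) ` A \<inter> set_pmf p"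
    using assms(2) by auto
  also have "measure p \<dots> = sum (pmf p) ((\<lambda>a. (a, c)) ` A)"
    using assms(1) by (simp add: measure_Int_set_pmf measure_measure_pmf_finite)
  also have "\<dots> = (\<Sum>a\<in>A. pmf p (a, c))"
    by (subst sum.reindex) (auto simp: inj_on_def)
  finally show ?thesis by simp
qed

lemma sum_pmf_markov_product_le_1:
  fixes p :: "('a \<times> 'b \<times> 'c) pmf"
  defines "pAC \<equiv> pmf (map_pmf (\<lambda>(a, b, c). (a, c)) p)"
    and "pBC \<equiv> pmf (map_pmf (\<lambda>(a, b, c). (b, c)) p)"
    and "pC \<equiv> pmf (map_pmf (\<lambda>(a, b, c). c) p)"
  assumes fin: "finite (set_pmf p)"
  shows "(\<Sum>(a, b, c)\<in>set_pmf p. pAC (a, c) * pBC (b, c) / pC c) \<le> 1"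
proof -
  define A where "A = fst ` set_pmf p"
  define B where "B = (fst \<circ> snd) ` set_pmf p"
  define C where "C = (snd \<circ> snd) ` set_pmf p"
  have fins: "finite A" "finite B" "finite C"
    using fin by (simp_all add: A_def B_def C_def)
  have "pC = pmf (map_pmf snd (map_pmf (\<lambda>(a, b, c). (a, c)) p))"
    "pC = pmf (map_pmf snd (map_pmf (\<lambda>(a, b, c). (b, c)) p))"
    by (auto simp: pC_def map_pmf_comp intro!: arg_cong[where f=pmf] map_pmf_cong)
  moreover have "set_pmf (map_pmf (\<lambda>(a, b, c). (a, c)) p) \<subseteq> A \<times> UNIV"
    "set_pmf (map_pmf (\<lambda>(a, b, c). (b, c)) p) \<subseteq> B \<times> UNIV"
    by (force simp: A_def B_def)+
  ultimately have marg: "(\<Sum>a\<in>A. pAC (a, c)) = pC c" "(\<Sum>b\<in>B. pBC (b, c)) = pC c" for c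
    unfolding pAC_def pBC_def by (simp_all add: sum_pmf_eq_pmf_map_snd fins)
  have "set_pmf p \<subseteq> A \<times> B \<times> C"
    by (force simp: A_def B_def C_def)
  moreover have "0 \<le> pAC (a, c) * pBC (b, c) / pC c" for a b c
    by (simp add: pAC_def pBC_def pC_def)
  ultimately have "(\<Sum>(a, b, c)\<in>set_pmf p. pAC (a, c) * pBC (b, c) / pC c)
      \<le> (\<Sum>(a, b, c)\<in>A \<times> B \<times> C. pAC (a, c) * pBC (b, c) / pC c)"
    using fins by (intro sum_mono2) auto
  also have "\<dots> = (\<Sum>a\<in>A. \<Sum>c\<in>C. \<Sum>b\<in>B. pAC (a, c) * pBC (b, c) / pC c)"
    by (simp add: sum.cartesian_product[symmetric] sum.swap[of _ B])
  also have "\<dots> = (\<Sum>c\<in>C. (\<Sum>a\<in>A. pAC (a, c)) * (\<Sum>b\<in>B. pBC (b, c)) / pC c)"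
    by (subst sum.swap) (simp add: sum_product sum_divide_distrib)
  also have "\<dots> = (\<Sum>c\<in>set_pmf (map_pmf (\<lambda>(a, b, c). c) p). pC c)"
    unfolding marg by (simp add: C_def case_prod_beta)
  also have "\<dots> = 1"
    unfolding pC_def using fin by (simp add: sum_pmf_eq_1)
  finally show ?thesis .
qed

text \<open>Gibbs' inequality against \<open>q(a, b, c) = p(a, c) p(b, c) / p(c)\<close>, the law of the Markov chain
  \<open>A - C - B\<close> with the same pairwise marginals.\<close>
lemma entropy_pmf_submodular:
  fixes p :: "('a \<times> 'b \<times> 'c) pmf"
  assumes fin: "finite (set_pmf p)"
  shows "entropy_pmf p + entropy_pmf (map_pmf (\<lambda>(a, b, c). c) p)
    \<le> entropy_pmf (map_pmf (\<lambda>(a, b, c). (a, c)) p) + entropy_pmf (map_pmf (\<lambda>(a, b, c). (b, c)) p)"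
proof -
  define fAC :: "'a \<times> 'b \<times> 'c \<Rightarrow> 'a \<times> 'c" where "fAC = (\<lambda>(a, b, c). (a, c))"
  define fBC :: "'a \<times> 'b \<times> 'c \<Rightarrow> 'b \<times> 'c" where "fBC = (\<lambda>(a, b, c). (b, c))"
  define fC :: "'a \<times> 'b \<times> 'c \<Rightarrow> 'c" where "fC = (\<lambda>(a, b, c). c)"
  let ?pAC = "pmf (map_pmf fAC p)" and ?pBC = "pmf (map_pmf fBC p)" and ?pC = "pmf (map_pmf fC p)"
  define q where "q = (\<lambda>z. ?pAC (fAC z) * ?pBC (fBC z) / ?pC (fC z))"
  have pos: "0 < pmf p z" "0 < ?pAC (fAC z)" "0 < ?pBC (fBC z)" "0 < ?pC (fC z)"
    if "z \<in> set_pmf p" for z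
    using that by (auto simp: pmf_positive)
  have "(\<Sum>z\<in>set_pmf p. pmf p z * log 2 (q z / pmf p z))
      = (\<Sum>z\<in>set_pmf p. pmf p z * log 2 (?pAC (fAC z)) + pmf p z * log 2 (?pBC (fBC z))
          - pmf p z * log 2 (?pC (fC z)) - pmf p z * log 2 (pmf p z))"
  proof (intro sum.cong refl)
    fix z assume "z \<in> set_pmf p"
    note pos = pos[OF this]
    then have "log 2 (q z / pmf p z) = log 2 (?pAC (fAC z)) + log 2 (?pBC (fBC z))
        - log 2 (?pC (fC z)) - log 2 (pmf p z)"
      by (simp add: q_def log_divide log_mult)
    then show "pmf p z * log 2 (q z / pmf p z) = pmf p z * log 2 (?pAC (fAC z))
        + pmf p z * log 2 (?pBC (fBC z)) - pmf p z * log 2 (?pC (fC z)) - pmf p z * log 2 (pmf p z)"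
      by (simp add: right_diff_distrib distrib_left)
  qed
  also have "\<dots> = entropy_pmf p + entropy_pmf (map_pmf fC p)
      - entropy_pmf (map_pmf fAC p) - entropy_pmf (map_pmf fBC p)"
    by (simp only: entropy_pmf_map_pmf[OF fin]) (simp add: entropy_pmf_def sum.distrib sum_subtractf)
  finally have "entropy_pmf p + entropy_pmf (map_pmf fC p) - entropy_pmf (map_pmf fAC p)
      - entropy_pmf (map_pmf fBC p) \<le> 0"
    using gibbs_inequality[OF fin, of q] sum_pmf_markov_product_le_1[OF fin] pos
    by (simp add: q_def fAC_def fBC_def fC_def case_prod_unfold)
  then show ?thesis by (simp add: fAC_def fBC_def fC_def)
qed

lemma entropy_pmf_map_submodular:
  assumes fin: "finite (set_pmf p)"
  shows "entropy_pmf (map_pmf (\<lambda>x. (f x, g x, h x)) p) + entropy_pmf (map_pmf h p)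
    \<le> entropy_pmf (map_pmf (\<lambda>x. (f x, h x)) p) + entropy_pmf (map_pmf (\<lambda>x. (g x, h x)) p)"
  using entropy_pmf_submodular[of "map_pmf (\<lambda>x. (f x, g x, h x)) p"] fin
  by (simp add: map_pmf_comp)

lemma mutual_info_map_pmf_swap:
  assumes fin: "finite (set_pmf p)"
  shows "mutual_info (map_pmf (\<lambda>x. (f x, g x)) p) = mutual_info (map_pmf (\<lambda>x. (g x, f x)) p)"
proof -
  have "entropy_pmf (map_pmf (\<lambda>x. (f x, g x)) p) = entropy_pmf (map_pmf (\<lambda>x. (g x, f x)) p)"
    by (rule entropy_pmf_map_eq_same_fibres[OF fin]) auto
  then show ?thesis by (simp add: mutual_info_map_pmf_pair[OF fin])
qed

lemma mutual_info_map_fst_le: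
  assumes fin: "finite (set_pmf p)"
  shows "mutual_info (map_pmf (\<lambda>x. (h (f x), g x)) p) \<le> mutual_info (map_pmf (\<lambda>x. (f x, g x)) p)"
proof -
  have "entropy_pmf (map_pmf (\<lambda>x. (f x, g x, h (f x))) p) + entropy_pmf (map_pmf (\<lambda>x. h (f x)) p)
      \<le> entropy_pmf (map_pmf (\<lambda>x. (f x, h (f x))) p) + entropy_pmf (map_pmf (\<lambda>x. (g x, h (f x))) p)"
    by (rule entropy_pmf_map_submodular[OF fin])
  moreover have "entropy_pmf (map_pmf (\<lambda>x. (f x, g x, h (f x))) p) = entropy_pmf (map_pmf (\<lambda>x. (f x, g x)) p)"
    "entropy_pmf (map_pmf (\<lambda>x. (f x, h (f x))) p) = entropy_pmf (map_pmf f p)"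
    "entropy_pmf (map_pmf (\<lambda>x. (g x, h (f x))) p) = entropy_pmf (map_pmf (\<lambda>x. (h (f x), g x)) p)"
    by (rule entropy_pmf_map_eq_same_fibres[OF fin]; auto)+
  ultimately show ?thesis by (simp add: mutual_info_map_pmf_pair[OF fin])
qed

lemma mutual_info_map_le:
  assumes fin: "finite (set_pmf p)"
  shows "mutual_info (map_pmf (\<lambda>x. (h (f x), k (g x))) p) \<le> mutual_info (map_pmf (\<lambda>x. (f x, g x)) p)"
proof -
  have "mutual_info (map_pmf (\<lambda>x. (h (f x), k (g x))) p) = mutual_info (map_pmf (\<lambda>x. (k (g x), h (f x))) p)"
    by (rule mutual_info_map_pmf_swap[OF fin])
  also have "\<dots> \<le> mutual_info (map_pmf (\<lambda>x. (g x, h (f x))) p)"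
    by (rule mutual_info_map_fst_le[OF fin])
  also have "\<dots> = mutual_info (map_pmf (\<lambda>x. (h (f x), g x)) p)"
    by (rule mutual_info_map_pmf_swap[OF fin])
  also have "\<dots> \<le> mutual_info (map_pmf (\<lambda>x. (f x, g x)) p)"
    by (rule mutual_info_map_fst_le[OF fin])
  finally show ?thesis .
qed

lemma mutual_info_map_inj:
  assumes fin: "finite (set_pmf p)" and "inj h" "inj k"
  shows "mutual_info (map_pmf (\<lambda>x. (h (f x), k (g x))) p) = mutual_info (map_pmf (\<lambda>x. (f x, g x)) p)"
proof (rule antisym)
  have "mutual_info (map_pmf (\<lambda>x. (f x, g x)) p)
      = mutual_info (map_pmf (\<lambda>x. (inv h (h (f x)), inv k (k (g x)))) p)"
    using assms by simp
  also have "\<dots> \<le> mutual_info (map_pmf (\<lambda>x. (h (f x), k (g x))) p)"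
    by (rule mutual_info_map_le[OF fin])
  finally show "mutual_info (map_pmf (\<lambda>x. (f x, g x)) p) \<le> \<dots>" .
qed (rule mutual_info_map_le[OF fin])

lemma mutual_info_add_le:
  assumes fin: "finite (set_pmf p)"
  shows "mutual_info (map_pmf (\<lambda>x. (f x, g x)) p) + mutual_info (map_pmf (\<lambda>x. (f x, h x)) p)
    \<le> mutual_info (map_pmf (\<lambda>x. (f x, (g x, h x))) p) + mutual_info (map_pmf (\<lambda>x. (g x, h x)) p)"
proof -
  have "entropy_pmf (map_pmf (\<lambda>x. (g x, h x, f x)) p) + entropy_pmf (map_pmf f p)
      \<le> entropy_pmf (map_pmf (\<lambda>x. (g x, f x)) p) + entropy_pmf (map_pmf (\<lambda>x. (h x, f x)) p)"
    by (rule entropy_pmf_map_submodular[OF fin])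
  moreover have "entropy_pmf (map_pmf (\<lambda>x. (g x, h x, f x)) p) = entropy_pmf (map_pmf (\<lambda>x. (f x, (g x, h x))) p)"
    "entropy_pmf (map_pmf (\<lambda>x. (g x, f x)) p) = entropy_pmf (map_pmf (\<lambda>x. (f x, g x)) p)"
    "entropy_pmf (map_pmf (\<lambda>x. (h x, f x)) p) = entropy_pmf (map_pmf (\<lambda>x. (f x, h x)) p)"
    by (rule entropy_pmf_map_eq_same_fibres[OF fin]; auto)+
  ultimately show ?thesis by (simp add: mutual_info_map_pmf_pair[OF fin])
qed

section \<open>Chain rule\<close>

lemma sum_UNIV_pmf_map_pmf:
  fixes p :: "'a::finite pmf" and f :: "'a \<Rightarrow> 'b::finite"
  shows "(\<Sum>y\<in>UNIV. pmf (map_pmf f p) y * h y) = (\<Sum>x\<in>UNIV. pmf p x * h (f x))"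
proof -
  have "(\<Sum>y\<in>UNIV. pmf (map_pmf f p) y * h y) = measure_pmf.expectation (map_pmf f p) h"
    by (subst integral_measure_pmf_real[where A=UNIV]) (auto simp: mult.commute)
  also have "\<dots> = measure_pmf.expectation p (\<lambda>x. h (f x))"
    by simp
  also have "\<dots> = (\<Sum>x\<in>UNIV. pmf p x * h (f x))"
    by (subst integral_measure_pmf_real[where A=UNIV]) (auto simp: mult.commute)
  finally show ?thesis .
qed

lemma entropy_pmf_finite_UNIV:
  "entropy_pmf (p :: 'a::finite pmf) = - (\<Sum>x\<in>UNIV. pmf p x * log 2 (pmf p x))"
  unfolding entropy_pmf_def
  by (subst sum.mono_neutral_left[of UNIV "set_pmf p"]) (auto simp: pmf_eq_0_set_pmf)

lemma pmf_map_Pair: "pmf (map_pmf (Pair y') p) (y, x) = (if y' = y then pmf p x else 0)"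
proof (cases "y' = y")
  case True
  have "inj (Pair y)" by (auto simp: inj_on_def)
  from pmf_map_inj'[OF this, of p x] True show ?thesis by simp
next
  case False
  then have "(y, x) \<notin> set_pmf (map_pmf (Pair y') p)" by auto
  with False show ?thesis by (simp add: pmf_eq_0_set_pmf)
qed

lemma pmf_bind_map_Pair:
  "pmf (bind_pmf p (\<lambda>y. map_pmf (Pair y) (K y))) (y, x) = pmf p y * pmf (K y) x"
proof -
  have "pmf (bind_pmf p (\<lambda>y. map_pmf (Pair y) (K y))) (y, x)
      = measure_pmf.expectation p (\<lambda>y'. if y' = y then pmf (K y') x else 0)"
    by (simp add: pmf_bind pmf_map_Pair)
  also have "\<dots> = pmf p y * pmf (K y) x"
    by (subst integral_measure_pmf_real[where A="{y}"]) (auto split: if_split_asm)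
  finally show ?thesis .
qed

lemma entropy_pmf_bind_map_Pair:
  fixes p :: "'a::finite pmf" and K :: "'a \<Rightarrow> 'b::finite pmf"
  shows "entropy_pmf (bind_pmf p (\<lambda>y. map_pmf (Pair y) (K y)))
    = entropy_pmf p + (\<Sum>y\<in>UNIV. pmf p y * entropy_pmf (K y))"
proof -
  let ?q = "bind_pmf p (\<lambda>y. map_pmf (Pair y) (K y))"
  have log_prod: "pmf p y * pmf (K y) x * log 2 (pmf p y * pmf (K y) x)
     = pmf (K y) x * (pmf p y * log 2 (pmf p y)) + pmf p y * (pmf (K y) x * log 2 (pmf (K y) x))"
    for y x
  proof (cases "pmf p y = 0 \<or> pmf (K y) x = 0")
    case False
    then have "0 < pmf p y" "0 < pmf (K y) x"
      using pmf_nonneg[of p y] pmf_nonneg[of "K y" x] by linarith+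
    then show ?thesis by (simp add: log_mult algebra_simps)
  qed auto
  have "(\<Sum>z\<in>UNIV. pmf ?q z * log 2 (pmf ?q z))
      = (\<Sum>y\<in>UNIV. \<Sum>x\<in>UNIV. pmf ?q (y, x) * log 2 (pmf ?q (y, x)))"
    by (subst sum.cartesian_product) (simp add: case_prod_beta UNIV_Times_UNIV)
  also have "\<dots> = (\<Sum>y\<in>UNIV. \<Sum>x\<in>UNIV. pmf p y * pmf (K y) x * log 2 (pmf p y * pmf (K y) x))"
    by (simp add: pmf_bind_map_Pair)
  also have "\<dots> = (\<Sum>y\<in>UNIV. (\<Sum>x\<in>UNIV. pmf (K y) x) * (pmf p y * log 2 (pmf p y))
      + pmf p y * (\<Sum>x\<in>UNIV. pmf (K y) x * log 2 (pmf (K y) x)))"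
    by (simp add: log_prod sum.distrib sum_distrib_left sum_distrib_right)
  finally show ?thesis
    by (simp add: entropy_pmf_finite_UNIV sum_pmf_eq_1 sum.distrib sum_negf)
qed

text \<open>Only meaningful for \<open>y\<close> in the support of \<open>map_pmf fst p\<close>: \<open>cond_pmf\<close> of a null event is
  unspecified. All uses below are insensitive to the other values.\<close>
definition cond_snd_pmf :: "('a \<times> 'b) pmf \<Rightarrow> 'a \<Rightarrow> 'b pmf" where
  "cond_snd_pmf p y = map_pmf snd (cond_pmf p {z. fst z = y})"

lemma bind_cond_snd_pmf:
  "bind_pmf (map_pmf fst p) (\<lambda>y. map_pmf (Pair y) (cond_snd_pmf p y)) = p"
proof -
  have "bind_pmf (map_pmf fst p) (\<lambda>y. map_pmf (Pair y) (cond_snd_pmf p y))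
      = bind_pmf (map_pmf fst p) (\<lambda>y. cond_pmf p {z. fst z = y})"
  proof (rule bind_pmf_cong[OF refl])
    fix y assume "y \<in> set_pmf (map_pmf fst p)"
    then have "set_pmf p \<inter> {z. fst z = y} \<noteq> {}" by auto
    from set_cond_pmf[OF this] show "map_pmf (Pair y) (cond_snd_pmf p y) = cond_pmf p {z. fst z = y}"
      by (auto simp: cond_snd_pmf_def map_pmf_comp intro!: map_pmf_idI)
  qed
  also have "\<dots> = p"
    by (rule bind_cond_pmf_cancel) (auto simp: measure_map_pmf vimage_def)
  finally show ?thesis .
qed

lemma entropy_pmf_eq_cond:
  fixes p :: "('a::finite \<times> 'b::finite) pmf"
  shows "entropy_pmf p
    = entropy_pmf (map_pmf fst p) + (\<Sum>y\<in>UNIV. pmf (map_pmf fst p) y * entropy_pmf (cond_snd_pmf p y))"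
  by (subst (1) bind_cond_snd_pmf[of p, symmetric]) (rule entropy_pmf_bind_map_Pair)

lemma entropy_pmf_pair_pmf:
  fixes p :: "'a::finite pmf" and q :: "'b::finite pmf"
  shows "entropy_pmf (pair_pmf p q) = entropy_pmf p + entropy_pmf q"
  unfolding pair_pmf_def bind_return_pmf'
  using entropy_pmf_bind_map_Pair[of p "\<lambda>_. q"]
  by (simp add: map_pmf_def sum_distrib_right[symmetric] sum_pmf_eq_1)

section \<open>Functional representation\<close>

text \<open>Draw \<open>s\<close> from \<open>p\<close>, then \<open>x\<close> from the conditional law of \<open>q\<close> given the key \<open>g s\<close>:
  when \<open>map_pmf g p = map_pmf fst q\<close>, this couples \<open>p\<close> and \<open>q\<close> along \<open>g\<close> so that \<open>x\<close> is
  conditionally independent of \<open>s\<close> given \<open>g s\<close>.\<close>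
definition glue_pmf :: "'s pmf \<Rightarrow> ('s \<Rightarrow> 'k) \<Rightarrow> ('k \<times> 'x) pmf \<Rightarrow> ('s \<times> 'x) pmf" where
  "glue_pmf p g q = bind_pmf p (\<lambda>s. map_pmf (Pair s) (cond_snd_pmf q (g s)))"

lemma map_fst_glue_pmf: "map_pmf fst (glue_pmf p g q) = p"
  by (simp add: glue_pmf_def map_bind_pmf map_pmf_comp bind_return_pmf')

lemma map_glue_pmf:
  assumes "map_pmf g p = map_pmf fst q"
  shows "map_pmf (\<lambda>(s, x). (g s, x)) (glue_pmf p g q) = q"
proof -
  have "map_pmf (\<lambda>(s, x). (g s, x)) (glue_pmf p g q)
      = bind_pmf (map_pmf g p) (\<lambda>k. map_pmf (Pair k) (cond_snd_pmf q k))"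
    by (simp add: glue_pmf_def map_bind_pmf map_pmf_comp bind_map_pmf)
  then show ?thesis by (simp add: assms bind_cond_snd_pmf)
qed

lemma entropy_pmf_glue_pmf:
  fixes p :: "'s::finite pmf" and q :: "('k::finite \<times> 'x::finite) pmf"
  assumes "map_pmf g p = map_pmf fst q"
  shows "entropy_pmf (glue_pmf p g q) = entropy_pmf p + entropy_pmf q - entropy_pmf (map_pmf fst q)"
proof -
  have "entropy_pmf (glue_pmf p g q) = entropy_pmf p + (\<Sum>s\<in>UNIV. pmf p s * entropy_pmf (cond_snd_pmf q (g s)))"
    unfolding glue_pmf_def by (rule entropy_pmf_bind_map_Pair)
  also have "(\<Sum>s\<in>UNIV. pmf p s * entropy_pmf (cond_snd_pmf q (g s)))
      = (\<Sum>k\<in>UNIV. pmf (map_pmf g p) k * entropy_pmf (cond_snd_pmf q k))"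
    by (rule sum_UNIV_pmf_map_pmf[symmetric])
  also have "\<dots> = entropy_pmf q - entropy_pmf (map_pmf fst q)"
    using entropy_pmf_eq_cond[of q] by (simp add: assms)
  finally show ?thesis by simp
qed

definition random_function_pmf :: "('i::finite \<times> 'c) pmf \<Rightarrow> ('i \<Rightarrow> 'c) pmf" where
  "random_function_pmf q = Pi_pmf UNIV undefined (cond_snd_pmf q)"

lemma functional_representation:
  "map_pmf (\<lambda>(i, w). (i, w i)) (pair_pmf (map_pmf fst q) (random_function_pmf q)) = q"
proof -
  have "map_pmf (\<lambda>(i, w). (i, w i)) (pair_pmf (map_pmf fst q) (random_function_pmf q))
      = bind_pmf (map_pmf fst q) (\<lambda>i. map_pmf (Pair i) (map_pmf (\<lambda>w. w i) (random_function_pmf q)))"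
    by (simp add: pair_pmf_def map_bind_pmf map_pmf_def[symmetric] map_pmf_comp)
  also have "\<dots> = q"
    by (simp add: random_function_pmf_def Pi_pmf_component bind_cond_snd_pmf)
  finally show ?thesis .
qed

lemma mutual_info_glue_pmf:
  fixes p :: "'s::finite pmf" and q :: "('k::finite \<times> 'x::finite) pmf"
  assumes "map_pmf g p = map_pmf fst q"
  shows "mutual_info (glue_pmf p g q) = mutual_info q"
proof -
  have "map_pmf snd (glue_pmf p g q) = map_pmf snd q"
    using arg_cong[OF map_glue_pmf[OF assms], of "map_pmf snd"] by (simp add: map_pmf_comp split_beta)
  then show ?thesis
    by (simp add: mutual_info_eq_entropy_pmf entropy_pmf_glue_pmf[OF assms] map_fst_glue_pmf)
qed

lemma mutual_info_pair_pmf_independent: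
  fixes p :: "('a::finite \<times> 'b::finite) pmf" and q :: "'w::finite pmf"
  shows "mutual_info (map_pmf (\<lambda>((a, b), w). (a, (b, w))) (pair_pmf p q)) = mutual_info p"
proof -
  define r where "r = map_pmf (\<lambda>((a, b), w). (a, (b, w))) (pair_pmf p q)"
  have "entropy_pmf r = entropy_pmf p + entropy_pmf q"
    unfolding r_def by (subst entropy_pmf_map_inj) (auto simp: inj_on_def entropy_pmf_pair_pmf)
  moreover have "map_pmf snd r = pair_pmf (map_pmf snd p) q"
    unfolding r_def map_pmf_comp using map_pair[of snd id p q] by (simp add: case_prod_unfold)
  moreover have "map_pmf fst r = map_pmf fst (map_pmf fst (pair_pmf p q))"
    unfolding r_def map_pmf_comp by (simp add: case_prod_unfold)
  ultimately show ?thesis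
    unfolding r_def[symmetric] map_fst_pair_pmf
    by (simp add: mutual_info_eq_entropy_pmf entropy_pmf_pair_pmf)
qed

text \<open>\<open>R\<close> is the law of \<open>(((X\<^sub>1, X\<^sub>2), W), X)\<close> described in the header.\<close>
lemma exists_functional_representation:
  fixes Q :: "('x::finite \<times> 'a::finite \<times> 'b::finite \<times> 'c::finite) pmf"
  obtains R :: "((('a \<times> 'b) \<times> ('a \<times> 'b \<Rightarrow> 'c)) \<times> 'x) pmf" where
    "map_pmf (\<lambda>(((a, b), w), x). (x, a, b, w (a, b))) R = Q"
    "mutual_info (map_pmf (\<lambda>(s, x). (x, s)) R) = mutual_info (map_pmf (\<lambda>(x, a, b, c). (x, (a, b, c))) Q)"
    "mutual_info (map_pmf (\<lambda>(((a, b), w), x). (a, (b, w))) R) = mutual_info (map_pmf (\<lambda>(x, a, b, c). (a, b)) Q)"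
proof
  define T where "T = map_pmf (\<lambda>(x, a, b, c). (((a, b), c), x)) Q"
  define S where "S = pair_pmf (map_pmf fst (map_pmf fst T)) (random_function_pmf (map_pmf fst T))"
  define g :: "('a \<times> 'b) \<times> ('a \<times> 'b \<Rightarrow> 'c) \<Rightarrow> ('a \<times> 'b) \<times> 'c" where "g = (\<lambda>(i, w). (i, w i))"
  define R where "R = glue_pmf S g T"
  have key: "map_pmf g S = map_pmf fst T"
    unfolding S_def g_def by (rule functional_representation)
  have "Q = map_pmf (\<lambda>(((a, b), c), x). (x, a, b, c)) T"
    by (simp add: T_def map_pmf_comp case_prod_unfold)
  also have "T = map_pmf (\<lambda>(s, x). (g s, x)) R"
    unfolding R_def by (rule map_glue_pmf[OF key, symmetric])
  finally show "map_pmf (\<lambda>(((a, b), w), x). (x, a, b, w (a, b))) R = Q"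
    by (simp add: map_pmf_comp g_def case_prod_unfold)
  have "mutual_info (map_pmf (\<lambda>(s, x). (x, s)) R) = mutual_info R"
    using mutual_info_map_pmf_swap[of R snd fst] by (simp add: case_prod_unfold)
  also have "\<dots> = mutual_info T"
    unfolding R_def by (rule mutual_info_glue_pmf[OF key])
  also have "\<dots> = mutual_info (map_pmf (\<lambda>(x, a, b, c). (x, (a, b, c))) Q)"
    using mutual_info_map_inj[of Q "\<lambda>(a, b, c). ((a, b), c)" id snd fst]
      mutual_info_map_pmf_swap[of Q snd fst]
    by (simp add: T_def inj_on_def case_prod_unfold)
  finally show "mutual_info (map_pmf (\<lambda>(s, x). (x, s)) R) = \<dots>" .
  have "map_pmf (\<lambda>(((a, b), w), x). (a, (b, w))) R = map_pmf (\<lambda>((a, b), w). (a, (b, w))) (map_pmf fst R)"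
    by (simp add: map_pmf_comp case_prod_unfold)
  then have "mutual_info (map_pmf (\<lambda>(((a, b), w), x). (a, (b, w))) R)
      = mutual_info (map_pmf (\<lambda>((a, b), w). (a, (b, w))) S)"
    by (simp only: R_def map_fst_glue_pmf)
  also have "\<dots> = mutual_info (map_pmf (\<lambda>(x, a, b, c). (a, b)) Q)"
    unfolding S_def mutual_info_pair_pmf_independent by (simp add: T_def map_pmf_comp case_prod_unfold)
  finally show "mutual_info (map_pmf (\<lambda>(((a, b), w), x). (a, (b, w))) R) = \<dots>" .
qed

section \<open>The two regions\<close>

text \<open>The auxiliaries \<open>U = X\<^sub>1\<close> and \<open>V = (X\<^sub>2, W)\<close> are encoded by \<open>to_nat\<close>; the reconstruction of
  \<open>X\<^sub>1\<^sub>2\<close> evaluates \<open>W\<close> at \<open>(X\<^sub>1, X\<^sub>2)\<close>.\<close>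
lemma RD_EGCstar_pre_corner:
  fixes Q :: "('x::finite \<times> 'y::finite \<times> 'y \<times> 'y) pmf" and d :: "'x \<Rightarrow> 'y \<Rightarrow> real"
  defines "i1 \<equiv> mutual_info (map_pmf (\<lambda>(x, a, b, c). (x, a)) Q)"
    and "isum \<equiv> mutual_info (map_pmf (\<lambda>(x, a, b, c). (x, (a, b, c))) Q)
      + mutual_info (map_pmf (\<lambda>(x, a, b, c). (a, b)) Q)"
  assumes rates: "i1 \<le> R1" "isum - i1 \<le> R2"
    and distortions: "measure_pmf.expectation Q (\<lambda>(x, a, b, c). d x a) \<le> D1"
      "measure_pmf.expectation Q (\<lambda>(x, a, b, c). d x b) \<le> D2"
      "measure_pmf.expectation Q (\<lambda>(x, a, b, c). d x c) \<le> D12"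
  shows "(R1, R2, D1, D2, D12) \<in> RD_EGCstar_pre (map_pmf fst Q) d"
proof -
  obtain R :: "((('y \<times> 'y) \<times> ('y \<times> 'y \<Rightarrow> 'y)) \<times> 'x) pmf" where
    RQ: "map_pmf (\<lambda>(((a, b), w), x). (x, a, b, w (a, b))) R = Q" and
    R_XS: "mutual_info (map_pmf (\<lambda>(s, x). (x, s)) R) = mutual_info (map_pmf (\<lambda>(x, a, b, c). (x, (a, b, c))) Q)" and
    R_AS: "mutual_info (map_pmf (\<lambda>(((a, b), w), x). (a, (b, w))) R) = mutual_info (map_pmf (\<lambda>(x, a, b, c). (a, b)) Q)"
    by (rule exists_functional_representation)
  have fin: "finite (set_pmf R)" by simp
  define P where "P = map_pmf (\<lambda>(((a, b), w), x). (x, to_nat a, to_nat (b, w))) R"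
  define \<phi>1 :: "nat \<Rightarrow> 'y" where "\<phi>1 = from_nat"
  define \<phi>2 :: "nat \<Rightarrow> 'y" where "\<phi>2 v = fst (from_nat v :: 'y \<times> ('y \<times> 'y \<Rightarrow> 'y))" for v
  define \<phi>12 :: "nat \<Rightarrow> nat \<Rightarrow> 'y" where
    "\<phi>12 u v = (case from_nat v :: 'y \<times> ('y \<times> 'y \<Rightarrow> 'y) of (b, w) \<Rightarrow> w (from_nat u, b))" for u v
  have inj: "inj (to_nat :: 'y \<Rightarrow> nat)" "inj (to_nat :: 'y \<times> ('y \<times> 'y \<Rightarrow> 'y) \<Rightarrow> nat)"
    "inj (\<lambda>((a, b), w). (to_nat (a :: 'y), to_nat (b :: 'y, w :: 'y \<times> 'y \<Rightarrow> 'y)))"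
    by (auto simp: inj_on_def)
  have P_U: "mutual_info (map_pmf (\<lambda>(x, u, v). (x, u)) P) = i1"
    using mutual_info_map_inj[OF fin _ inj(1), of id snd "\<lambda>z. fst (fst (fst z))"]
    unfolding i1_def RQ[symmetric] by (simp add: P_def map_pmf_comp case_prod_unfold)
  have P_UV: "mutual_info (map_pmf (\<lambda>(x, u, v). (x, (u, v))) P) = mutual_info (map_pmf (\<lambda>(s, x). (x, s)) R)"
    using mutual_info_map_inj[OF fin _ inj(3), of id snd fst]
    by (simp add: P_def map_pmf_comp case_prod_unfold)
  have P_UV': "mutual_info (map_pmf (\<lambda>(x, u, v). (u, v)) P) = mutual_info (map_pmf (\<lambda>(((a, b), w), x). (a, (b, w))) R)"
    using mutual_info_map_inj[OF fin inj(1,2), of "\<lambda>z. fst (fst (fst z))" "\<lambda>z. (snd (fst (fst z)), snd (fst z))"]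
    by (simp add: P_def map_pmf_comp case_prod_unfold)
  have P_sum: "mutual_info (map_pmf (\<lambda>(x, u, v). (x, (u, v))) P) + mutual_info (map_pmf (\<lambda>(x, u, v). (u, v)) P) = isum"
    unfolding P_UV P_UV' R_XS R_AS isum_def ..
  have "mutual_info (map_pmf (\<lambda>(x, u, v). (x, u)) P) + mutual_info (map_pmf (\<lambda>(x, u, v). (x, v)) P)
      \<le> mutual_info (map_pmf (\<lambda>(x, u, v). (x, (u, v))) P) + mutual_info (map_pmf (\<lambda>(x, u, v). (u, v)) P)"
    using mutual_info_add_le[of P fst "\<lambda>z. fst (snd z)" "\<lambda>z. snd (snd z)"]
    by (simp add: P_def case_prod_unfold)
  then have P_V: "mutual_info (map_pmf (\<lambda>(x, u, v). (x, v)) P) \<le> R2"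
    using P_U P_sum rates by linarith
  have "map_pmf fst P = map_pmf fst Q"
    unfolding RQ[symmetric] by (simp add: P_def map_pmf_comp case_prod_unfold)
  moreover have "measure_pmf.expectation P (\<lambda>(x, u, v). d x (\<phi>1 u)) \<le> D1"
    "measure_pmf.expectation P (\<lambda>(x, u, v). d x (\<phi>2 v)) \<le> D2"
    "measure_pmf.expectation P (\<lambda>(x, u, v). d x (\<phi>12 u v)) \<le> D12"
    using distortions unfolding RQ[symmetric]
    by (simp_all add: P_def \<phi>1_def \<phi>2_def \<phi>12_def case_prod_unfold)
  moreover have "finite (set_pmf P)"
    by (simp add: P_def)
  ultimately show ?thesis
    using P_U P_V P_sum rates unfolding RD_EGCstar_pre_def by fastforce
qed

lemma RD_EGCstar_pre_subset_RD_EGC_pre: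
  fixes pX :: "'x pmf" and d :: "'x \<Rightarrow> 'y \<Rightarrow> real"
  shows "RD_EGCstar_pre pX d \<subseteq> RD_EGC_pre pX d"
proof safe
  fix R1 R2 D1 D2 D12 assume "(R1, R2, D1, D2, D12) \<in> RD_EGCstar_pre pX d"
  then obtain P :: "('x \<times> nat \<times> nat) pmf" and \<phi>1 \<phi>2 \<phi>12 where fin: "finite (set_pmf P)" and P: "map_pmf fst P = pX"
    and rates: "mutual_info (map_pmf (\<lambda>(x, u, v). (x, u)) P) \<le> R1"
      "mutual_info (map_pmf (\<lambda>(x, u, v). (x, v)) P) \<le> R2"
      "mutual_info (map_pmf (\<lambda>(x, u, v). (x, (u, v))) P) + mutual_info (map_pmf (\<lambda>(x, u, v). (u, v)) P) \<le> R1 + R2"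
    and distortions: "measure_pmf.expectation P (\<lambda>(x, u, v). d x (\<phi>1 u)) \<le> D1"
      "measure_pmf.expectation P (\<lambda>(x, u, v). d x (\<phi>2 v)) \<le> D2"
      "measure_pmf.expectation P (\<lambda>(x, u, v). d x (\<phi>12 u v)) \<le> D12"
    unfolding RD_EGCstar_pre_def by (simp only: mem_Collect_eq prod.case) blast
  define Q where "Q = map_pmf (\<lambda>(x, u, v). (x, \<phi>1 u, \<phi>2 v, \<phi>12 u v)) P"
  have "mutual_info (map_pmf (\<lambda>(x, a, b, c). (x, a)) Q) \<le> mutual_info (map_pmf (\<lambda>(x, u, v). (x, u)) P)"
    using mutual_info_map_le[OF fin, of id fst \<phi>1 "\<lambda>z. fst (snd z)"]
    by (simp add: Q_def map_pmf_comp case_prod_unfold)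
  moreover have "mutual_info (map_pmf (\<lambda>(x, a, b, c). (x, b)) Q) \<le> mutual_info (map_pmf (\<lambda>(x, u, v). (x, v)) P)"
    using mutual_info_map_le[OF fin, of id fst \<phi>2 "\<lambda>z. snd (snd z)"]
    by (simp add: Q_def map_pmf_comp case_prod_unfold)
  moreover have "mutual_info (map_pmf (\<lambda>(x, a, b, c). (x, (a, b, c))) Q) \<le> mutual_info (map_pmf (\<lambda>(x, u, v). (x, (u, v))) P)"
    using mutual_info_map_le[OF fin, of id fst "\<lambda>(u, v). (\<phi>1 u, \<phi>2 v, \<phi>12 u v)" snd]
    by (simp add: Q_def map_pmf_comp case_prod_unfold)
  moreover have "mutual_info (map_pmf (\<lambda>(x, a, b, c). (a, b)) Q) \<le> mutual_info (map_pmf (\<lambda>(x, u, v). (u, v)) P)"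
    using mutual_info_map_le[OF fin, of \<phi>1 "\<lambda>z. fst (snd z)" \<phi>2 "\<lambda>z. snd (snd z)"]
    by (simp add: Q_def map_pmf_comp case_prod_unfold)
  moreover have "map_pmf fst Q = pX"
    using P by (simp add: Q_def map_pmf_comp case_prod_unfold)
  ultimately show "(R1, R2, D1, D2, D12) \<in> RD_EGC_pre pX d"
    using rates distortions unfolding RD_EGC_pre_def
    by (auto simp: Q_def case_prod_unfold intro!: exI[of _ Q])
qed

lemma RD_EGCstar_pre_swap:
  fixes pX :: "'x pmf" and d :: "'x \<Rightarrow> 'y \<Rightarrow> real"
  assumes "(R1, R2, D1, D2, D12) \<in> RD_EGCstar_pre pX d"
  shows "(R2, R1, D2, D1, D12) \<in> RD_EGCstar_pre pX d"
proof -
  obtain P :: "('x \<times> nat \<times> nat) pmf" and \<phi>1 \<phi>2 \<phi>12 where fin: "finite (set_pmf P)" and P: "map_pmf fst P = pX"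
    and rates: "mutual_info (map_pmf (\<lambda>(x, u, v). (x, u)) P) \<le> R1"
      "mutual_info (map_pmf (\<lambda>(x, u, v). (x, v)) P) \<le> R2"
      "mutual_info (map_pmf (\<lambda>(x, u, v). (x, (u, v))) P) + mutual_info (map_pmf (\<lambda>(x, u, v). (u, v)) P) \<le> R1 + R2"
    and distortions: "measure_pmf.expectation P (\<lambda>(x, u, v). d x (\<phi>1 u)) \<le> D1"
      "measure_pmf.expectation P (\<lambda>(x, u, v). d x (\<phi>2 v)) \<le> D2"
      "measure_pmf.expectation P (\<lambda>(x, u, v). d x (\<phi>12 u v)) \<le> D12"
    using assms unfolding RD_EGCstar_pre_def by (simp only: mem_Collect_eq prod.case) blast
  define P' where "P' = map_pmf (\<lambda>(x, u, v). (x, v, u)) P"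
  have P'_UV: "mutual_info (map_pmf (\<lambda>(x, u, v). (x, (u, v))) P') = mutual_info (map_pmf (\<lambda>(x, u, v). (x, (u, v))) P)"
    using mutual_info_map_inj[OF fin, of id prod.swap fst snd]
    by (simp add: P'_def map_pmf_comp case_prod_unfold prod.swap_def)
  have P'_UV': "mutual_info (map_pmf (\<lambda>(x, u, v). (u, v)) P') = mutual_info (map_pmf (\<lambda>(x, u, v). (u, v)) P)"
    using mutual_info_map_pmf_swap[OF fin, of "\<lambda>z. snd (snd z)" "\<lambda>z. fst (snd z)"]
    by (simp add: P'_def map_pmf_comp case_prod_unfold)
  have P': "finite (set_pmf P')" "map_pmf fst P' = pX"
    using fin P by (simp_all add: P'_def map_pmf_comp case_prod_unfold)
  show ?thesis
    unfolding RD_EGCstar_pre_def mem_Collect_eq prod.case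
    by (rule exI[of _ P'], rule exI[of _ \<phi>2], rule exI[of _ \<phi>1], rule exI[of _ "\<lambda>u v. \<phi>12 v u"])
      (use P' P'_UV P'_UV' rates distortions in \<open>auto simp: P'_def map_pmf_comp case_prod_unfold\<close>)
qed

lemma convex_hull_pentagon:
  fixes S :: "(real \<times> real \<times> 'a::real_vector) set"
  assumes corner1: "\<And>r1 r2. a \<le> r1 \<Longrightarrow> s - a \<le> r2 \<Longrightarrow> (r1, r2, D) \<in> S"
    and corner2: "\<And>r1 r2. s - b \<le> r1 \<Longrightarrow> b \<le> r2 \<Longrightarrow> (r1, r2, D) \<in> S"
    and "a \<le> R1" "b \<le> R2" "s \<le> R1 + R2"
  shows "(R1, R2, D) \<in> convex hull S"
proof (cases "s - a \<le> R2 \<or> s - b \<le> R1")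
  case True
  then show ?thesis
    using assms by (auto intro: hull_inc)
next
  case False
  define l where "l = (R2 - b) / (R1 + R2 - a - b)"
  have "0 < R1 + R2 - a - b"
    using False assms(3-5) by linarith
  then have l: "l * (R1 + R2 - a - b) = R2 - b"
    by (simp add: l_def)
  have "0 \<le> l" "l \<le> 1"
    using False assms(3-5) by (auto simp: l_def field_simps)
  moreover have "(a, R1 + R2 - a, D) \<in> S" "(R1 + R2 - b, b, D) \<in> S"
    using assms(3-5) by (auto intro: corner1 corner2)
  ultimately have "l *\<^sub>R (a, R1 + R2 - a, D) + (1 - l) *\<^sub>R (R1 + R2 - b, b, D) \<in> convex hull S"
    by (intro convexD[OF convex_convex_hull] hull_inc) auto
  also have "l *\<^sub>R (a, R1 + R2 - a, D) + (1 - l) *\<^sub>R (R1 + R2 - b, b, D) = (R1, R2, D)"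
  proof -
    have "l * a + (1 - l) * (R1 + R2 - b) = R1" "l * (R1 + R2 - a) + (1 - l) * b = R2"
      using l by (simp_all add: algebra_simps)
    then show ?thesis
      by (simp add: algebra_simps)
  qed
  finally show ?thesis .
qed

lemma RD_EGC_pre_subset_convex_hull_RD_EGCstar_pre:
  fixes pX :: "'x::finite pmf" and d :: "'x \<Rightarrow> 'y::finite \<Rightarrow> real"
  shows "RD_EGC_pre pX d \<subseteq> convex hull (RD_EGCstar_pre pX d)"
proof safe
  fix R1 R2 D1 D2 D12 assume "(R1, R2, D1, D2, D12) \<in> RD_EGC_pre pX d"
  then obtain Q :: "('x \<times> 'y \<times> 'y \<times> 'y) pmf" where Q: "map_pmf fst Q = pX"
    and rates: "mutual_info (map_pmf (\<lambda>(x, a, b, c). (x, a)) Q) \<le> R1"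
      "mutual_info (map_pmf (\<lambda>(x, a, b, c). (x, b)) Q) \<le> R2"
      "mutual_info (map_pmf (\<lambda>(x, a, b, c). (x, (a, b, c))) Q)
        + mutual_info (map_pmf (\<lambda>(x, a, b, c). (a, b)) Q) \<le> R1 + R2"
    and distortions: "measure_pmf.expectation Q (\<lambda>(x, a, b, c). d x a) \<le> D1"
      "measure_pmf.expectation Q (\<lambda>(x, a, b, c). d x b) \<le> D2"
      "measure_pmf.expectation Q (\<lambda>(x, a, b, c). d x c) \<le> D12"
    unfolding RD_EGC_pre_def by (simp only: mem_Collect_eq prod.case) blast
  define Q' where "Q' = map_pmf (\<lambda>(x, a, b, c). (x, b, a, c)) Q"
  have Q'_sum: "mutual_info (map_pmf (\<lambda>(x, a, b, c). (x, (a, b, c))) Q')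
      + mutual_info (map_pmf (\<lambda>(x, a, b, c). (a, b)) Q')
    = mutual_info (map_pmf (\<lambda>(x, a, b, c). (x, (a, b, c))) Q)
      + mutual_info (map_pmf (\<lambda>(x, a, b, c). (a, b)) Q)"
    using mutual_info_map_inj[of Q id "\<lambda>(b, a, c). (a, b, c)" fst snd]
      mutual_info_map_pmf_swap[of Q "\<lambda>z. fst (snd z)" "\<lambda>z. fst (snd (snd z))"]
    by (simp add: Q'_def map_pmf_comp case_prod_unfold inj_on_def)
  show "(R1, R2, D1, D2, D12) \<in> convex hull RD_EGCstar_pre pX d"
  proof (rule convex_hull_pentagon)
    fix r1 r2
    assume "mutual_info (map_pmf (\<lambda>(x, a, b, c). (x, a)) Q) \<le> r1"
      "mutual_info (map_pmf (\<lambda>(x, a, b, c). (x, (a, b, c))) Q)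
        + mutual_info (map_pmf (\<lambda>(x, a, b, c). (a, b)) Q)
        - mutual_info (map_pmf (\<lambda>(x, a, b, c). (x, a)) Q) \<le> r2"
    then show "(r1, r2, D1, D2, D12) \<in> RD_EGCstar_pre pX d"
      using RD_EGCstar_pre_corner[of Q r1 r2 d D1 D2 D12] Q distortions by simp
  next
    fix r1 r2
    assume "mutual_info (map_pmf (\<lambda>(x, a, b, c). (x, (a, b, c))) Q)
        + mutual_info (map_pmf (\<lambda>(x, a, b, c). (a, b)) Q)
        - mutual_info (map_pmf (\<lambda>(x, a, b, c). (x, b)) Q) \<le> r1"
      "mutual_info (map_pmf (\<lambda>(x, a, b, c). (x, b)) Q) \<le> r2"
    then have "(r2, r1, D2, D1, D12) \<in> RD_EGCstar_pre pX d"
      using RD_EGCstar_pre_corner[of Q' r2 r1 d D2 D1 D12] Q Q'_sum distortions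
      by (simp add: Q'_def map_pmf_comp case_prod_unfold)
    then show "(r1, r2, D1, D2, D12) \<in> RD_EGCstar_pre pX d"
      by (rule RD_EGCstar_pre_swap)
  qed (use rates in auto)
qed

theorem theorem1:
  fixes pX :: "'x::finite pmf" and d :: "'x \<Rightarrow> 'y::finite \<Rightarrow> real"
  assumes "\<forall>x y. d x y \<ge> 0"
  shows "RD_EGCstar pX d = RD_EGC pX d"
proof -
  have "convex hull (RD_EGCstar_pre pX d) \<subseteq> convex hull (RD_EGC_pre pX d)"
    by (rule hull_mono[OF RD_EGCstar_pre_subset_RD_EGC_pre])
  moreover have "convex hull (RD_EGC_pre pX d) \<subseteq> convex hull (RD_EGCstar_pre pX d)"
    using RD_EGC_pre_subset_convex_hull_RD_EGCstar_pre convex_convex_hull by (rule hull_minimal)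
  ultimately show ?thesis
    unfolding RD_EGCstar_def RD_EGC_def convex_closure_def by simp
qed

end
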